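(* Let $n_1,n_2,n^*_1,n^*_2$ be integers with $1\le n_1\le n^*_1\le n^*_2\le n_2$, $n=n_1+n_2$, $n^*=n^*_1+n^*_2$. Let $X_1,\dots,X_n$ be dependent nonnegative random variables sharing an Archimedean survival copula with generator $\psi_1$ ($\phi_1=\psi_1^{-1}$), with $X_i\sim F_1(\lambda_1x)$ for $i\le n_1$ and $X_j\sim F_2(\lambda_2x)$ for $j>n_1$; let $Y_1,\dots,Y_{n^*}$ be dependent nonnegative random variables sharing an Archimedean survival copula with generator $\psi_2$ ($\phi_2=\psi_2^{-1}$), with $Y_i\sim F_1(\mu_1x)$ for $i\le n^*_1$ and $Y_j\sim F_2(\mu_2x)$ for $j>n^*_1$. Let $X_{1:n}(n_1,n_2)=\min_iX_i$, $Y_{1:n^*}(n^*_1,n^*_2)=\min_iY_i$. Assume $r_1(x)\le r_2(x)$ for all $x>0$, $\boldsymbol\lambda=(\lambda_1,\lambda_2),\boldsymbol\mu=(\mu_1,\mu_2)\in\mathcal E_+$, $(n_1,n_2)\succeq_w(n^*_1,n^*_2)$, $\phi_2\circ\psi_1$ is super-additive, $\psi_1$ or $\psi_2$ is log-convex, and $r_1$ or $r_2$ is increasing. Then $$(\underbrace{\lambda_1,\dots,\lambda_1}_{n^*_1},\underbrace{\lambda_2,\dots,\lambda_2}_{n^*_2})\succeq_{w}(\underbrace{\mu_1,\dots,\mu_1}_{n^*_1},\underbrace{\mu_2,\dots,\mu_2}_{n^*_2})\ \Longrightarrow\ X_{1:n}(n_1,n_2)\le_{st}Y_{1:n^*}(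n^*_1,n^*_2).$$
   Context: $Z\sim F(\lambda x)$ means $Z$ has distribution function $x\mapsto F(\lambda x)$. Archimedean generator: a continuous nonincreasing $\psi:[0,\infty)\to[0,1]$ with $\psi(0)=1$, $\psi(\infty)=0$, which is $m$-monotone; $\phi=\psi^{-1}$. $Z_1,\dots,Z_m$ with marginal survival functions $\bar G_i$ share an Archimedean survival copula with generator $\psi$ if $P(Z_1>z_1,\dots,Z_m>z_m)=\psi(\sum_i\phi(\bar G_i(z_i)))$. $F_1,F_2$ are absolutely continuous distribution functions on $[0,\infty)$ with densities $f_k$ and hazard rates $r_k=f_k/(1-F_k)$. Super-additive: $g(x)+g(y)\le g(x+y)$. $\mathcal E_+=\{(x_1,x_2):0<x_1\le x_2\}$. For $\boldsymbol a,\boldsymbol b\in\mathbb R^k$ with increasingly ordered coordinates $a_{(1)}\le\dots\le a_{(k)}$: $\boldsymbol a\succeq_w\boldsymbol b$ means $\sum_{i=l}^ka_{(i)}\ge\sum_{i=l}^kb_{(i)}$ for all $l$. $U\le_{st}V$ means $P(U>x)\le P(V>x)$ for all $x$. Increasing/decreasing are in the weak sense. *)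

theory Defs
  imports "HOL-Probability.Probability"
begin

definition d_monotone :: "nat \<Rightarrow> (real \<Rightarrow> real) \<Rightarrow> bool" where
  "d_monotone d \<psi> \<longleftrightarrow>
     (\<forall>k. k + 2 < d \<longrightarrow> (\<forall>x>0. ((deriv ^^ k) \<psi>) differentiable (at x))) \<and>
     (\<forall>k. k + 2 \<le> d \<longrightarrow> (\<forall>x>0. 0 \<le> (-1) ^ k * (deriv ^^ k) \<psi> x)) \<and>
     (\<forall>x y. 0 < x \<longrightarrow> x \<le> y \<longrightarrow>
        (-1) ^ (d - 2) * (deriv ^^ (d - 2)) \<psi> y \<le> (-1) ^ (d - 2) * (deriv ^^ (d - 2)) \<psi> x) \<and>
     convex_on {0<..} (\<lambda>x. (-1) ^ (d - 2) * (deriv ^^ (d - 2)) \<psi> x)"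

definition archimedean_generator :: "nat \<Rightarrow> (real \<Rightarrow> real) \<Rightarrow> bool" where
  "archimedean_generator m \<psi> \<longleftrightarrow>
     continuous_on {0..} \<psi> \<and>
     (\<forall>x\<ge>0. 0 \<le> \<psi> x \<and> \<psi> x \<le> 1) \<and>
     (\<forall>x y. 0 \<le> x \<longrightarrow> x \<le> y \<longrightarrow> \<psi> y \<le> \<psi> x) \<and>
     \<psi> 0 = 1 \<and> (\<psi> \<longlongrightarrow> 0) at_top \<and>
     d_monotone m \<psi>"

text \<open>phi = psi^{-1} (generalized inverse, valued in [0,inf]; phi 0 = inf if psi > 0).\<close>
definition gen_inv :: "(real \<Rightarrow> real) \<Rightarrow> real \<Rightarrow> ereal" where
  "gen_inv \<psi> t = Inf (ereal ` {x. 0 \<le> x \<and> \<psi> x \<le> t})"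

definition gen_ext :: "(real \<Rightarrow> real) \<Rightarrow> ereal \<Rightarrow> real" where
  "gen_ext \<psi> e = (if e = \<infinity> then 0 else \<psi> (real_of_ereal e))"

definition arch_survival_copula ::
    "'a measure \<Rightarrow> nat \<Rightarrow> (nat \<Rightarrow> 'a \<Rightarrow> real) \<Rightarrow> (nat \<Rightarrow> real \<Rightarrow> real) \<Rightarrow> (real \<Rightarrow> real) \<Rightarrow> bool" where
  "arch_survival_copula M m Z Gbar \<psi> \<longleftrightarrow>
     (\<forall>z :: nat \<Rightarrow> real.
        measure M {\<omega> \<in> space M. \<forall>i<m. Z i \<omega> > z i}
          = gen_ext \<psi> (\<Sum>i<m. gen_inv \<psi> (Gbar i (z i))))"

definition abs_cont_cdf :: "(real \<Rightarrow> real) \<Rightarrow> (real \<Rightarrow> real) \<Rightarrow> bool" where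
  "abs_cont_cdf F f \<longleftrightarrow>
     (\<forall>x<0. F x = 0) \<and> (\<forall>x\<ge>0. 0 \<le> f x) \<and>
     (\<forall>x\<ge>0. (f has_integral F x) {0..x}) \<and> (F \<longlongrightarrow> 1) at_top"

definition hazard :: "(real \<Rightarrow> real) \<Rightarrow> (real \<Rightarrow> real) \<Rightarrow> real \<Rightarrow> real" where
  "hazard F f x = f x / (1 - F x)"

definition super_additive :: "(real \<Rightarrow> ereal) \<Rightarrow> bool" where
  "super_additive g \<longleftrightarrow> (\<forall>x y. 0 \<le> x \<longrightarrow> 0 \<le> y \<longrightarrow> g x + g y \<le> g (x + y))"

definition log_convex :: "(real \<Rightarrow> real) \<Rightarrow> bool" where
  "log_convex \<psi> \<longleftrightarrow> (\<forall>x y t. 0 \<le> x \<longrightarrow> 0 \<le> y \<longrightarrow> 0 < t \<longrightarrow> t < 1 \<longrightarrow>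
      \<psi> (t * x + (1 - t) * y) \<le> \<psi> x powr t * \<psi> y powr (1 - t))"

text \<open>Weak (sub)majorization a \<succeq>_w b: sums of the largest components dominate.\<close>
definition wmaj :: "real list \<Rightarrow> real list \<Rightarrow> bool" where
  "wmaj a b \<longleftrightarrow> length a = length b \<and>
     (\<forall>l < length a. (\<Sum>i=l..<length a. sort b ! i) \<le> (\<Sum>i=l..<length a. sort a ! i))"

end

theory Submission
  imports Defs
begin

text \<open>Write \<open>G\<^sub>k = 1 - F\<^sub>k\<close>. For \<open>x \<ge> 0\<close> both survival functions of the minima are
  Archimedean expressions, \<open>\<psi>\<^sub>1(n\<^sub>1 \<phi>\<^sub>1(a) + n\<^sub>2 \<phi>\<^sub>1(b))\<close> with \<open>a = G\<^sub>1(\<lambda>\<^sub>1 x)\<close>, \<open>b = G\<^sub>2(\<lambda>\<^sub>2 x)\<close>,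
  and \<open>\<psi>\<^sub>2(n\<^sub>1\<^sup>* \<phi>\<^sub>2(c) + n\<^sub>2\<^sup>* \<phi>\<^sub>2(d))\<close> with \<open>c = G\<^sub>1(\<mu>\<^sub>1 x)\<close>, \<open>d = G\<^sub>2(\<mu>\<^sub>2 x)\<close>.
  Since \<open>r\<^sub>1 \<le> r\<^sub>2\<close> gives \<open>b \<le> a\<close>, passing from \<open>(n\<^sub>1, n\<^sub>2)\<close> to \<open>(n\<^sub>1\<^sup>*, n\<^sub>2\<^sup>*)\<close> can only
  increase the first expression, and super-additivity of \<open>\<phi>\<^sub>2 \<circ> \<psi>\<^sub>1\<close> lets one replace \<open>\<psi>\<^sub>1\<close>
  by \<open>\<psi>\<^sub>2\<close>. It remains to show \<open>n\<^sub>1\<^sup>* \<phi>(c) + n\<^sub>2\<^sup>* \<phi>(d) \<le> n\<^sub>1\<^sup>* \<phi>(a) + n\<^sub>2\<^sup>* \<phi>(b)\<close>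
  for the log-convex generator \<open>\<psi>\<close>, which is immediate by monotonicity unless \<open>\<lambda>\<^sub>1 < \<mu>\<^sub>1\<close>.
  In that case, as \<open>r\<^sub>1\<close> or \<open>r\<^sub>2\<close> is increasing, some level \<open>\<rho>\<close> bounds \<open>r\<^sub>1\<close> from above on
  \<open>[\<lambda>\<^sub>1 x, \<mu>\<^sub>1 x]\<close> and \<open>r\<^sub>2\<close> from below on \<open>[\<mu>\<^sub>2 x, \<lambda>\<^sub>2 x]\<close>. Comparing \<open>G\<^sub>1\<close>, \<open>G\<^sub>2\<close> with
  \<open>exp (-\<rho> t)\<close> and using the majorization of the rates gives
  \<open>n\<^sub>1\<^sup>* (ln a - ln c) \<le> n\<^sub>2\<^sup>* (ln d - ln b)\<close>. Finally \<open>\<phi>(a) \<le> \<phi>(c) \<le> \<phi>(d) \<le> \<phi>(b)\<close>, and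
  since \<open>ln \<psi>\<close> is convex its slope on \<open>[\<phi>(a), \<phi>(c)]\<close> is at most its slope on \<open>[\<phi>(d), \<phi>(b)]\<close>,
  which turns the logarithmic inequality into the claim.\<close>

lemma survival_ratio_mono_of_hazard_le:
  fixes u v fu fv :: "real \<Rightarrow> real"
  assumes st: "s \<le> t" and cu: "continuous_on {s..t} u" and cv: "continuous_on {s..t} v"
    and iu: "\<And>x y. s \<le> x \<Longrightarrow> x \<le> y \<Longrightarrow> y \<le> t \<Longrightarrow> (fu has_integral (u x - u y)) {x..y}"
    and iv: "\<And>x y. s \<le> x \<Longrightarrow> x \<le> y \<Longrightarrow> y \<le> t \<Longrightarrow> (fv has_integral (v x - v y)) {x..y}"
    and fv_nonneg: "\<And>y. y \<in> {s..t} \<Longrightarrow> 0 \<le> fv y"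
    and v_pos: "\<And>y. y \<in> {s..t} \<Longrightarrow> 0 < v y"
    and hazard_le: "\<And>y. y \<in> {s<..t} \<Longrightarrow> fu y * v y \<le> fv y * u y"
  shows "u s * v t \<le> u t * v s"
proof (rule ccontr)
  assume contra: "\<not> ?thesis"
  define q where "q y = u y / v y" for y
  have q_t: "q t < q s"
    using contra v_pos[of s] v_pos[of t] st by (auto simp: q_def divide_simps mult.commute)
  have cq: "continuous_on {s..t} q"
    unfolding q_def using v_pos by (intro continuous_on_divide cu cv) force
  \<comment> \<open>\<open>u\<close> and \<open>v\<close> need not be differentiable, so instead of differentiating \<open>q\<close> compare
    integrals beyond the last point \<open>y0\<close> where \<open>q \<ge> q s\<close>: there \<open>u \<le> q y0 * v\<close>, hence
    \<open>fu \<le> q y0 * fv\<close>.\<close>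
  define B where "B = {s..t} \<inter> q -` {q s..}"
  have "closed B" unfolding B_def by (rule continuous_closed_preimage[OF cq]) auto
  moreover have "s \<in> B" "bdd_above B" using st by (auto simp: B_def intro: bdd_aboveI[of _ t])
  ultimately have "Sup B \<in> B" using closed_contains_Sup by blast
  define y0 where "y0 = Sup B"
  have y0: "s \<le> y0" "y0 \<le> t" "q s \<le> q y0" using \<open>Sup B \<in> B\<close> by (auto simp: B_def y0_def)
  have q_le: "q y \<le> q y0" if "y \<in> {y0<..t}" for y
  proof -
    have "y \<notin> B" using that cSup_upper[OF _ \<open>bdd_above B\<close>] by (force simp: y0_def)
    then show ?thesis using that y0 by (auto simp: B_def)
  qed
  have fu_le: "fu y \<le> q y0 * fv y" if "y \<in> {y0<..t}" for y
  proof -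
    have y: "y \<in> {s<..t}" using that y0 by auto
    have "u y \<le> q y0 * v y"
      using q_le[OF that] v_pos[of y] y by (simp add: q_def pos_divide_le_eq)
    then have "fv y * u y \<le> fv y * (q y0 * v y)"
      using fv_nonneg[of y] y by (intro mult_left_mono) auto
    then have "fu y * v y \<le> (q y0 * fv y) * v y"
      using hazard_le[OF y] by (simp add: ac_simps)
    then show ?thesis using v_pos[of y] y by simp
  qed
  have "u y0 - u t \<le> q y0 * (v y0 - v t)"
  proof (rule has_integral_le)
    show "(fu has_integral u y0 - u t) {y0<..<t}"
      using iu[OF y0(1) y0(2) order_refl] by (simp add: has_integral_Icc_iff_Ioo)
    show "((\<lambda>y. q y0 * fv y) has_integral q y0 * (v y0 - v t)) {y0<..<t}"
      using has_integral_mult_right[OF iv[OF y0(1) y0(2) order_refl]]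
      by (simp add: has_integral_Icc_iff_Ioo)
  qed (use fu_le in auto)
  moreover have "u y0 = q y0 * v y0" using v_pos[of y0] y0 by (simp add: q_def)
  ultimately have "q y0 * v t \<le> u t" by (simp add: algebra_simps)
  then have "q y0 \<le> q t" using v_pos[of t] st by (simp add: q_def pos_le_divide_eq)
  then show False using q_t y0 by simp
qed

lemma survival_ratio_mono:
  fixes u v fu fv :: "real \<Rightarrow> real"
  assumes st: "s \<le> t" and cu: "continuous_on {s..t} u" and cv: "continuous_on {s..t} v"
    and iu: "\<And>x y. s \<le> x \<Longrightarrow> x \<le> y \<Longrightarrow> y \<le> t \<Longrightarrow> (fu has_integral (u x - u y)) {x..y}"
    and iv: "\<And>x y. s \<le> x \<Longrightarrow> x \<le> y \<Longrightarrow> y \<le> t \<Longrightarrow> (fv has_integral (v x - v y)) {x..y}"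
    and fv_nonneg: "\<And>y. y \<in> {s..t} \<Longrightarrow> 0 \<le> fv y"
    and v_pos: "\<And>y. y \<in> {s..t} \<Longrightarrow> 0 < v y"
    and u_s: "0 < u s"
    and hazard_le: "\<And>y. y \<in> {s<..t} \<Longrightarrow> 0 < u y \<Longrightarrow> fu y * v y \<le> fv y * u y"
  shows "u s * v t \<le> u t * v s"
proof -
  have v_antimono: "v y \<le> v x" if "s \<le> x" "x \<le> y" "y \<le> t" for x y
    using has_integral_nonneg[OF iv[OF that]] fv_nonneg that by fastforce
  define c where "c = u s * v t / v s"
  have c_pos: "0 < c" using u_s v_pos st by (simp add: c_def)
  have "\<forall>y\<in>{s..t}. 0 < u y"
  proof (rule ccontr)
    \<comment> \<open>If \<open>u\<close> vanished, let \<open>z\<close> be the first point with \<open>u z = c/2\<close>. On \<open>[s, z]\<close> the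
      hazard bound holds unconditionally, and the previous lemma gives \<open>u z \<ge> c\<close>.\<close>
    assume "\<not> ?thesis"
    then obtain y1 where y1: "y1 \<in> {s..t}" "u y1 \<le> 0" by force
    define A where "A = {s..t} \<inter> u -` {..c/2}"
    have "closed A" unfolding A_def by (rule continuous_closed_preimage[OF cu]) auto
    moreover have "y1 \<in> A" "bdd_below A"
      using y1 c_pos by (auto simp: A_def intro: bdd_belowI[of _ s])
    ultimately have "Inf A \<in> A" using closed_contains_Inf by blast
    define z where "z = Inf A"
    have z: "s \<le> z" "z \<le> t" "u z \<le> c/2" using \<open>Inf A \<in> A\<close> by (auto simp: A_def z_def)
    have "c \<le> u s"
      using v_antimono[of s t] st v_pos[of s] v_pos[of t] u_s
      by (simp add: c_def divide_simps mult_left_mono)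
    then obtain w where w: "s \<le> w" "w \<le> z" "u w = c/2"
      using IVT2'[of u z "c/2" s] z continuous_on_subset[OF cu, of "{s..z}"] c_pos by auto
    then have "z \<le> w" using cInf_lower[OF _ \<open>bdd_below A\<close>, of w] z by (auto simp: A_def z_def)
    then have u_z: "u z = c/2" using w by simp
    have u_pos: "0 < u y" if "y \<in> {s..z}" for y
    proof (cases "y = z")
      case False
      then have "y \<notin> A" using that cInf_lower[OF _ \<open>bdd_below A\<close>] by (force simp: z_def)
      then show ?thesis using that z c_pos by (auto simp: A_def)
    qed (use u_z c_pos in simp)
    have "u s * v z \<le> u z * v s"
      by (rule survival_ratio_mono_of_hazard_le[of s z u v fu fv])
        (use z u_pos continuous_on_subset[OF cu, of "{s..z}"]
          continuous_on_subset[OF cv, of "{s..z}"] iu iv fv_nonneg v_pos hazard_le in auto)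
    moreover have "u s * v t \<le> u s * v z" using v_antimono[of z t] z u_s by simp
    ultimately have "c \<le> u z" using v_pos[of s] st by (simp add: c_def divide_simps)
    then show False using u_z c_pos by simp
  qed
  then show ?thesis
    by (intro survival_ratio_mono_of_hazard_le[of s t u v fu fv]) (use assms in auto)
qed

context
  fixes F f :: "real \<Rightarrow> real"
  assumes cdf: "abs_cont_cdf F f"
begin

lemma cdf_has_integral:
  assumes "0 \<le> x" "x \<le> y"
  shows "(f has_integral (F y - F x)) {x..y}"
proof -
  have int: "(f has_integral F z) {0..z}" if "0 \<le> z" for z
    using cdf that unfolding abs_cont_cdf_def by blast
  obtain j where j: "(f has_integral j) {x..y}"
    using integrable_subinterval_real[OF has_integral_integrable[OF int[of y]], of x y] assms
    by auto
  have "(f has_integral F x + j) {0..y}"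
    by (rule has_integral_combine[OF assms int[OF assms(1)] j])
  from has_integral_unique[OF this int[of y]] have "j = F y - F x" using assms by simp
  with j show ?thesis by simp
qed

lemma cdf_0: "F 0 = 0"
proof -
  have "(f has_integral F 0) {0..0}" using cdf unfolding abs_cont_cdf_def by blast
  then show ?thesis using has_integral_unique[OF _ has_integral_refl(2)[of f 0]] by simp
qed

lemma density_nonneg: "0 \<le> x \<Longrightarrow> 0 \<le> f x"
  using cdf unfolding abs_cont_cdf_def by blast

lemma cdf_neg: "x < 0 \<Longrightarrow> F x = 0"
  using cdf unfolding abs_cont_cdf_def by blast

lemma cdf_mono:
  assumes "x \<le> y"
  shows "F x \<le> F y"
proof -
  have incr: "F x' \<le> F y'" if "0 \<le> x'" "x' \<le> y'" for x' y'
  proof -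
    have "0 \<le> F y' - F x'"
      by (rule has_integral_nonneg[OF cdf_has_integral[OF that]]) (use density_nonneg that in auto)
    then show ?thesis by simp
  qed
  show ?thesis
    using cdf_neg[of x] cdf_neg[of y] incr[OF order_refl, of y] incr[of x y] cdf_0 assms
    by (cases "x < 0"; cases "y < 0") auto
qed

lemma cdf_nonneg: "0 \<le> F x"
  using cdf_neg[of x] cdf_mono[of 0 x] cdf_0 by (cases "x < 0") auto

lemma cdf_le_1: "F x \<le> 1"
proof -
  have ev: "eventually (\<lambda>y. F x \<le> F y) at_top"
    using eventually_ge_at_top[of x] by eventually_elim (rule cdf_mono)
  have "(F \<longlongrightarrow> 1) at_top" using cdf unfolding abs_cont_cdf_def by blast
  from tendsto_lowerbound[OF this ev] show ?thesis by simp
qed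

lemma survival_has_integral:
  "0 \<le> x \<Longrightarrow> x \<le> y \<Longrightarrow> (f has_integral ((1 - F x) - (1 - F y))) {x..y}"
  using cdf_has_integral by simp

lemma survival_continuous_on:
  assumes "0 \<le> s"
  shows "continuous_on {s..t} (\<lambda>y. 1 - F y)"
proof -
  have "continuous_on {0..t} F"
  proof (cases "0 \<le> t")
    case True
    have "continuous_on {0..t} (\<lambda>x. integral {0..x} f)"
      by (rule indefinite_integral_continuous_1 has_integral_integrable
          cdf_has_integral[OF order_refl True])+
    then show ?thesis
    proof (rule continuous_on_eq)
      show "integral {0..x} f = F x" if "x \<in> {0..t}" for x
        using cdf_has_integral[of 0 x] cdf_0 that by (simp add: integral_unique)
    qed
  qed simp
  then have "continuous_on {s..t} F" by (rule continuous_on_subset) (use assms in auto)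
  then show ?thesis by (rule continuous_on_diff[OF continuous_on_const])
qed

lemma hazard_nonneg:
  assumes "0 \<le> x"
  shows "0 \<le> hazard F f x"
  unfolding hazard_def using density_nonneg[OF assms] cdf_le_1[of x]
  by (intro divide_nonneg_nonneg) auto

end

lemma survival_le_of_hazard_le:
  assumes F1: "abs_cont_cdf F1 f1" and F2: "abs_cont_cdf F2 f2"
    and hazard_le: "\<And>y. y \<in> {0<..t} \<Longrightarrow> hazard F1 f1 y \<le> hazard F2 f2 y"
    and st: "0 \<le> s" "s \<le> t"
  shows "1 - F2 t \<le> 1 - F1 s"
proof (cases "F2 t < 1")
  case True
  have pos2: "0 < 1 - F2 y" if "y \<le> t" for y
    using cdf_mono[OF F2 that] True by simp
  have "(1 - F1 0) * (1 - F2 t) \<le> (1 - F1 t) * (1 - F2 0)"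
  proof (rule survival_ratio_mono[where fu = f1 and fv = f2])
    show "f1 y * (1 - F2 y) \<le> f2 y * (1 - F1 y)" if "y \<in> {0<..t}" "0 < 1 - F1 y" for y
      using hazard_le[OF that(1)] that pos2[of y] by (simp add: hazard_def divide_simps)
  qed (use st pos2 cdf_0[OF F1] survival_has_integral[OF F1] survival_has_integral[OF F2]
         survival_continuous_on[OF F1] survival_continuous_on[OF F2] density_nonneg[OF F2] in auto)
  then have "1 - F2 t \<le> 1 - F1 t" using cdf_0[OF F1] cdf_0[OF F2] by simp
  also have "\<dots> \<le> 1 - F1 s" using cdf_mono[OF F1 st(2)] by simp
  finally show ?thesis .
qed (use cdf_le_1[OF F1, of s] in simp)

lemma has_integral_exp_decay:
  fixes \<rho> :: real
  assumes "x \<le> y"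
  shows "((\<lambda>z. \<rho> * exp (- (\<rho> * z))) has_integral (exp (- (\<rho> * x)) - exp (- (\<rho> * y)))) {x..y}"
proof -
  have "((\<lambda>z. - exp (- (\<rho> * z))) has_real_derivative \<rho> * exp (- (\<rho> * z))) (at z within {x..y})"
    for z
    by (auto intro!: derivative_eq_intros)
  from fundamental_theorem_of_calculus[OF assms, of "\<lambda>z. - exp (- (\<rho> * z))"] this
  show ?thesis by (simp add: has_real_derivative_iff_has_vector_derivative)
qed

lemma log_survival_decrement_le:
  assumes cdf: "abs_cont_cdf F f" and "0 \<le> s" "s \<le> t" and "0 \<le> \<rho>" and "F s < 1"
    and hazard_le: "\<And>y. y \<in> {s<..t} \<Longrightarrow> hazard F f y \<le> \<rho>"
  shows "ln (1 - F s) - ln (1 - F t) \<le> \<rho> * (t - s)"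
proof -
  have "(1 - F s) * exp (- (\<rho> * t)) \<le> (1 - F t) * exp (- (\<rho> * s))"
  proof (rule survival_ratio_mono[where fu = f and fv = "\<lambda>y. \<rho> * exp (- (\<rho> * y))"])
    show "f y * exp (- (\<rho> * y)) \<le> \<rho> * exp (- (\<rho> * y)) * (1 - F y)"
      if "y \<in> {s<..t}" "0 < 1 - F y" for y
      using hazard_le[OF that(1)] that by (simp add: hazard_def divide_simps)
  qed (use assms survival_has_integral[OF cdf] survival_continuous_on[OF cdf] has_integral_exp_decay
         in \<open>auto intro!: continuous_intros\<close>)
  moreover have "0 < 1 - F s" using \<open>F s < 1\<close> by simp
  ultimately have "0 < 1 - F t" by (smt (verit) exp_gt_zero mult_pos_pos mult_nonpos_nonneg)
  with \<open>0 < 1 - F s\<close> \<open>(1 - F s) * exp (- (\<rho> * t)) \<le> (1 - F t) * exp (- (\<rho> * s))\<close>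
  show ?thesis
    by (smt (verit) ln_le_cancel_iff ln_mult exp_gt_zero ln_exp mult_pos_pos right_diff_distrib)
qed

lemma log_survival_decrement_ge:
  assumes cdf: "abs_cont_cdf F f" and st: "0 \<le> s" "s \<le> t" and "F t < 1"
    and hazard_ge: "\<And>y. y \<in> {s<..t} \<Longrightarrow> \<rho> \<le> hazard F f y"
  shows "\<rho> * (t - s) \<le> ln (1 - F s) - ln (1 - F t)"
proof -
  have pos: "0 < 1 - F y" if "y \<le> t" for y
    using cdf_mono[OF cdf that] \<open>F t < 1\<close> by simp
  have "exp (- (\<rho> * s)) * (1 - F t) \<le> exp (- (\<rho> * t)) * (1 - F s)"
  proof (rule survival_ratio_mono[where fu = "\<lambda>y. \<rho> * exp (- (\<rho> * y))" and fv = f])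
    show "\<rho> * exp (- (\<rho> * y)) * (1 - F y) \<le> f y * exp (- (\<rho> * y))" if "y \<in> {s<..t}" for y
      using hazard_ge[OF that] that pos[of y] by (simp add: hazard_def divide_simps)
  qed (use assms pos survival_has_integral[OF cdf] survival_continuous_on[OF cdf]
         has_integral_exp_decay density_nonneg[OF cdf] in \<open>auto intro!: continuous_intros\<close>)
  with pos[of s] pos[of t] st show ?thesis
    by (smt (verit) ln_le_cancel_iff ln_mult exp_gt_zero ln_exp mult_pos_pos right_diff_distrib)
qed

lemma convex_on_slopes_le:
  fixes f :: "real \<Rightarrow> real"
  assumes f: "convex_on I f" and I: "A \<in> I" "C \<in> I" "B \<in> I"
    and ord: "A \<le> C" "C \<le> D" "D \<le> B"
  shows "(f C - f A) * (B - D) \<le> (f B - f D) * (C - A)"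
proof (cases "A = C \<or> D = B")
  case False
  then have "A < C" "C < B" "D < B" using ord by auto
  have sym: "(f x - f y) / (x - y) = (f y - f x) / (y - x)" for x y
    by (metis minus_diff_eq minus_divide_divide)
  have "(f C - f A) / (C - A) \<le> (f B - f C) / (B - C)"
    using convex_on_slope_le[OF f I(1) I(3) \<open>A < C\<close> \<open>C < B\<close>] sym by simp
  also have "\<dots> \<le> (f B - f D) / (B - D)"
  proof (cases "C = D")
    case False
    then show ?thesis
      using convex_on_slope_le(2)[OF f I(2) I(3), of D] ord \<open>D < B\<close> sym by simp
  qed simp
  finally show ?thesis using \<open>A < C\<close> \<open>D < B\<close> by (simp add: field_simps)
qed auto

lemma convex_on_ln_of_log_convex:
  assumes lc: "log_convex \<psi>" and pos: "\<And>x. x \<in> {0..b} \<Longrightarrow> 0 < \<psi> x"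
  shows "convex_on {0..b} (\<lambda>x. ln (\<psi> x))"
proof (rule convex_onI)
  fix t x y :: real
  assume t: "0 < t" "t < 1" and xy: "x \<in> {0..b}" "y \<in> {0..b}"
  have mid: "(1 - t) * x + t * y \<in> {0..b}"
  proof -
    have "(1 - t) * x + t * y \<le> (1 - t) * b + t * b"
      using xy t by (intro add_mono mult_left_mono) auto
    moreover have "(1 - t) * b + t * b = b" by (simp add: algebra_simps)
    moreover have "0 \<le> (1 - t) * x + t * y"
      using xy t by (intro add_nonneg_nonneg mult_nonneg_nonneg) auto
    ultimately show ?thesis unfolding atLeastAtMost_iff by linarith
  qed
  have "\<psi> ((1 - t) * x + (1 - (1 - t)) * y) \<le> \<psi> x powr (1 - t) * \<psi> y powr (1 - (1 - t))"
    using lc[unfolded log_convex_def, rule_format, of x y "1 - t"] xy t by simp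
  then have "ln (\<psi> ((1 - t) * x + t * y)) \<le> ln (\<psi> x powr (1 - t) * \<psi> y powr t)"
    using pos[OF mid] pos xy by simp
  also have "\<dots> = (1 - t) * ln (\<psi> x) + t * ln (\<psi> y)"
    using pos[of x] pos[of y] xy by (simp add: ln_mult ln_powr)
  finally show "ln (\<psi> ((1 - t) *\<^sub>R x + t *\<^sub>R y)) \<le> (1 - t) * ln (\<psi> x) + t * ln (\<psi> y)"
    by simp
qed simp

lemma gen_inv_nonneg: "0 \<le> gen_inv \<psi> t"
  unfolding gen_inv_def by (rule Inf_greatest) auto

lemma gen_inv_antimono: "t \<le> t' \<Longrightarrow> gen_inv \<psi> t' \<le> gen_inv \<psi> t"
  unfolding gen_inv_def by (rule Inf_superset_mono) auto

context
  fixes \<psi> :: "real \<Rightarrow> real" and m :: nat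
  assumes gen: "archimedean_generator m \<psi>"
begin

lemma generator_nonneg: "0 \<le> x \<Longrightarrow> 0 \<le> \<psi> x"
  using gen unfolding archimedean_generator_def by blast

lemma generator_le_1: "0 \<le> x \<Longrightarrow> \<psi> x \<le> 1"
  using gen unfolding archimedean_generator_def by blast

lemma generator_antimono: "0 \<le> x \<Longrightarrow> x \<le> y \<Longrightarrow> \<psi> y \<le> \<psi> x"
  using gen unfolding archimedean_generator_def by blast

lemma gen_inv_finite:
  assumes "0 < t"
  shows "gen_inv \<psi> t \<noteq> \<infinity>"
proof -
  have "(\<psi> \<longlongrightarrow> 0) at_top" using gen unfolding archimedean_generator_def by blast
  from order_tendstoD(2)[OF this assms] obtain N where N: "\<And>x. x \<ge> N \<Longrightarrow> \<psi> x < t"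
    by (auto simp: eventually_at_top_linorder)
  define x where "x = max N 0"
  have "ereal x \<in> ereal ` {x. 0 \<le> x \<and> \<psi> x \<le> t}"
    using N[of x] by (intro imageI) (simp add: x_def)
  then have "gen_inv \<psi> t \<le> ereal x"
    unfolding gen_inv_def by (rule Inf_lower)
  then show ?thesis by auto
qed

lemma gen_inv_real:
  assumes t: "0 \<le> t" "t \<le> 1" and fin: "gen_inv \<psi> t \<noteq> \<infinity>"
  obtains r where "0 \<le> r" "gen_inv \<psi> t = ereal r" "\<psi> r = t"
proof -
  define S where "S = {x. 0 \<le> x \<and> \<psi> x \<le> t}"
  have cont: "continuous_on {0..} \<psi>" and "\<psi> 0 = 1"
    using gen unfolding archimedean_generator_def by blast+
  have "S \<noteq> {}" using fin by (auto simp: gen_inv_def S_def[symmetric] top_ereal_def)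
  moreover have "closed S"
    using continuous_closed_preimage[OF cont, of "{..t}"] by (simp add: S_def Int_def)
  moreover have S_below: "bdd_below S" by (rule bdd_belowI[of _ 0]) (auto simp: S_def)
  ultimately have "Inf S \<in> S" using closed_contains_Inf by blast
  define r where "r = Inf S"
  have r: "0 \<le> r" "\<psi> r \<le> t" using \<open>Inf S \<in> S\<close> by (auto simp: S_def r_def)
  have "gen_inv \<psi> t = ereal r"
  proof (rule antisym)
    show "gen_inv \<psi> t \<le> ereal r"
      unfolding gen_inv_def S_def[symmetric] using \<open>Inf S \<in> S\<close>
      by (intro Inf_lower) (auto simp: r_def)
    show "ereal r \<le> gen_inv \<psi> t"
      unfolding gen_inv_def S_def[symmetric]
      by (rule Inf_greatest) (auto simp: r_def intro: cInf_lower[OF _ S_below])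
  qed
  moreover have "\<psi> r = t"
  proof -
    obtain w where w: "0 \<le> w" "w \<le> r" "\<psi> w = t"
      using IVT2'[of \<psi> r t 0] r t \<open>\<psi> 0 = 1\<close> continuous_on_subset[OF cont, of "{0..r}"] by auto
    then have "r \<le> w" unfolding r_def by (intro cInf_lower[OF _ S_below]) (simp add: S_def)
    with w show ?thesis by simp
  qed
  ultimately show ?thesis using r that by blast
qed

lemma gen_inv_pos_real:
  assumes "0 < t" "t \<le> 1"
  obtains r where "0 \<le> r" "gen_inv \<psi> t = ereal r" "\<psi> r = t"
  using that gen_inv_real[OF less_imp_le[OF assms(1)] assms(2) gen_inv_finite[OF assms(1)]] by blast

lemma gen_ext_gen_inv:
  assumes "0 \<le> t" "t \<le> 1"
  shows "gen_ext \<psi> (gen_inv \<psi> t) = t"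
proof (cases "gen_inv \<psi> t = \<infinity>")
  case True
  then have "t = 0" using gen_inv_finite[of t] assms by fastforce
  with True show ?thesis by (simp add: gen_ext_def)
next
  case False
  then obtain r where "gen_inv \<psi> t = ereal r" "\<psi> r = t" using gen_inv_real[OF assms] by blast
  then show ?thesis by (simp add: gen_ext_def)
qed

lemma gen_ext_nonneg: "0 \<le> e \<Longrightarrow> 0 \<le> gen_ext \<psi> e"
  by (cases e) (auto simp: gen_ext_def intro: generator_nonneg)

lemma gen_ext_antimono:
  assumes "0 \<le> e" "e \<le> e'"
  shows "gen_ext \<psi> e' \<le> gen_ext \<psi> e"
  using assms gen_ext_nonneg[OF assms(1)]
  by (cases e; cases e') (auto simp: gen_ext_def intro: generator_antimono)

end

lemma super_additive_sum:
  assumes sa: "super_additive g" and "0 \<le> g 0" and "finite I"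
    and nonneg: "\<And>i. i \<in> I \<Longrightarrow> 0 \<le> s i"
  shows "(\<Sum>i\<in>I. g (s i)) \<le> g (\<Sum>i\<in>I. s i)"
  using \<open>finite I\<close> nonneg
proof (induction I rule: finite_induct)
  case (insert j I)
  have "(\<Sum>i\<in>insert j I. g (s i)) = g (s j) + (\<Sum>i\<in>I. g (s i))"
    using insert.hyps by (rule sum.insert)
  also have "\<dots> \<le> g (s j) + g (\<Sum>i\<in>I. s i)"
    using insert.IH insert.prems by (intro add_left_mono) blast
  also have "\<dots> \<le> g (s j + (\<Sum>i\<in>I. s i))"
    using sa insert.prems unfolding super_additive_def by (blast intro: sum_nonneg)
  also have "s j + (\<Sum>i\<in>I. s i) = (\<Sum>i\<in>insert j I. s i)"
    using insert.hyps by (rule sum.insert[symmetric])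
  finally show ?case .
qed (use \<open>0 \<le> g 0\<close> in simp)

lemma archimedean_le_of_super_additive:
  assumes gen1: "archimedean_generator m1 \<psi>1" and gen2: "archimedean_generator m2 \<psi>2"
    and sa: "super_additive (\<lambda>x. gen_inv \<psi>2 (\<psi>1 x))" and "finite I"
    and v: "\<And>i. i \<in> I \<Longrightarrow> 0 \<le> v i \<and> v i \<le> 1"
  shows "gen_ext \<psi>1 (\<Sum>i\<in>I. gen_inv \<psi>1 (v i)) \<le> gen_ext \<psi>2 (\<Sum>i\<in>I. gen_inv \<psi>2 (v i))"
proof (cases "\<exists>i\<in>I. gen_inv \<psi>1 (v i) = \<infinity>")
  case True
  then have "gen_ext \<psi>1 (\<Sum>i\<in>I. gen_inv \<psi>1 (v i)) = 0"
    using \<open>finite I\<close> by (simp add: sum_Pinfty gen_ext_def)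
  then show ?thesis by (simp add: gen_ext_nonneg[OF gen2] sum_nonneg gen_inv_nonneg)
next
  case False
  then have "\<forall>i\<in>I. \<exists>r\<ge>0. gen_inv \<psi>1 (v i) = ereal r \<and> \<psi>1 r = v i"
    using v gen_inv_real[OF gen1] by (metis (no_types, lifting))
  then obtain s where s: "\<And>i. i \<in> I \<Longrightarrow> 0 \<le> s i \<and> gen_inv \<psi>1 (v i) = ereal (s i) \<and> \<psi>1 (s i) = v i"
    by (metis (no_types, lifting))
  have lhs: "gen_ext \<psi>1 (\<Sum>i\<in>I. gen_inv \<psi>1 (v i)) = \<psi>1 (\<Sum>i\<in>I. s i)"
    using s by (simp add: gen_ext_def)
  have "(\<Sum>i\<in>I. gen_inv \<psi>2 (v i)) = (\<Sum>i\<in>I. gen_inv \<psi>2 (\<psi>1 (s i)))"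
    using s by simp
  also have "\<dots> \<le> gen_inv \<psi>2 (\<psi>1 (\<Sum>i\<in>I. s i))"
    by (rule super_additive_sum[OF sa gen_inv_nonneg \<open>finite I\<close>]) (use s in auto)
  finally have "gen_ext \<psi>2 (gen_inv \<psi>2 (\<psi>1 (\<Sum>i\<in>I. s i))) \<le> gen_ext \<psi>2 (\<Sum>i\<in>I. gen_inv \<psi>2 (v i))"
    by (rule gen_ext_antimono[OF gen2 sum_nonneg[OF gen_inv_nonneg]])
  moreover have "gen_ext \<psi>2 (gen_inv \<psi>2 (\<psi>1 (\<Sum>i\<in>I. s i))) = \<psi>1 (\<Sum>i\<in>I. s i)"
    using s
    by (intro gen_ext_gen_inv[OF gen2] generator_nonneg[OF gen1] generator_le_1[OF gen1] sum_nonneg)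
      auto
  ultimately show ?thesis using lhs by simp
qed

text \<open>\<open>block_sum \<psi> p q a b\<close> is the paper's \<open>p \<phi>(a) + q \<phi>(b)\<close>, written as the copula's sum over
  \<open>p + q\<close> coordinates, the first \<open>p\<close> of which have survival probability \<open>a\<close>.\<close>
definition block_sum :: "(real \<Rightarrow> real) \<Rightarrow> nat \<Rightarrow> nat \<Rightarrow> real \<Rightarrow> real \<Rightarrow> ereal" where
  "block_sum \<psi> p q a b = (\<Sum>i<p + q. gen_inv \<psi> (if i < p then a else b))"

lemma block_sum_eq_real:
  assumes "gen_inv \<psi> a = ereal A" "gen_inv \<psi> b = ereal B"
  shows "block_sum \<psi> p q a b = ereal (real p * A + real q * B)"
proof -
  have "block_sum \<psi> p q a b = (\<Sum>i<p + q. ereal (if i < p then A else B))"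
    unfolding block_sum_def using assms by (intro sum.cong) auto
  also have "\<dots> = ereal (\<Sum>i<p + q. if i < p then A else B)" by (rule sum_ereal)
  also have "(\<Sum>i<p + q. if i < p then A else B) = real p * A + real q * B"
    by (induction q) (simp_all add: algebra_simps)
  finally show ?thesis .
qed

lemma block_sum_antimono: "a \<le> a' \<Longrightarrow> b \<le> b' \<Longrightarrow> block_sum \<psi> p q a' b' \<le> block_sum \<psi> p q a b"
  unfolding block_sum_def by (intro sum_mono) (simp add: gen_inv_antimono)

lemma block_sum_mono_blocks:
  assumes "b \<le> a" "p \<le> p'" "p' + q' \<le> p + q"
  shows "block_sum \<psi> p' q' a b \<le> block_sum \<psi> p q a b"
proof -
  have "block_sum \<psi> p' q' a b \<le> (\<Sum>i<p' + q'. gen_inv \<psi> (if i < p then a else b))"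
    unfolding block_sum_def using assms(1,2) by (intro sum_mono) (simp add: gen_inv_antimono)
  also have "\<dots> \<le> block_sum \<psi> p q a b"
    unfolding block_sum_def using assms(3) by (intro sum_mono2) (auto simp: gen_inv_nonneg)
  finally show ?thesis .
qed

lemma gen_ext_block_sum_zero:
  assumes gen: "archimedean_generator m \<psi>" and "0 < q"
  shows "gen_ext \<psi> (block_sum \<psi> p q a 0) = 0"
proof -
  have "gen_inv \<psi> 0 = (\<Sum>i\<in>{p}. gen_inv \<psi> (if i < p then a else 0))" by simp
  also have "\<dots> \<le> block_sum \<psi> p q a 0"
    unfolding block_sum_def using \<open>0 < q\<close> by (intro sum_mono2) (auto simp: gen_inv_nonneg)
  finally have "gen_ext \<psi> (block_sum \<psi> p q a 0) \<le> gen_ext \<psi> (gen_inv \<psi> 0)"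
    by (rule gen_ext_antimono[OF gen gen_inv_nonneg])
  also have "\<dots> = 0" by (rule gen_ext_gen_inv[OF gen]) auto
  finally show ?thesis
    using gen_ext_nonneg[OF gen] by (simp add: block_sum_def sum_nonneg gen_inv_nonneg antisym)
qed

lemma block_sum_le_of_log_convex:
  assumes gen: "archimedean_generator m \<psi>" and lc: "log_convex \<psi>"
    and ord: "0 < b" "b \<le> d" "d \<le> c" "c \<le> a" "a \<le> 1"
    and log_bound: "real p * (ln a - ln c) \<le> real q * (ln d - ln b)"
  shows "block_sum \<psi> p q c d \<le> block_sum \<psi> p q a b"
proof -
  obtain A where A: "0 \<le> A" "gen_inv \<psi> a = ereal A" "\<psi> A = a"
    using gen_inv_pos_real[OF gen, of a] ord by auto
  obtain B where B: "gen_inv \<psi> b = ereal B" "\<psi> B = b"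
    using gen_inv_pos_real[OF gen, of b] ord by auto
  obtain C where C: "gen_inv \<psi> c = ereal C" "\<psi> C = c"
    using gen_inv_pos_real[OF gen, of c] ord by auto
  obtain D where D: "gen_inv \<psi> d = ereal D" "\<psi> D = d"
    using gen_inv_pos_real[OF gen, of d] ord by auto
  have "ereal A \<le> ereal C" "ereal C \<le> ereal D" "ereal D \<le> ereal B"
    unfolding A(2)[symmetric] B(1)[symmetric] C(1)[symmetric] D(1)[symmetric] using ord
    by (simp_all add: gen_inv_antimono)
  then have ord': "A \<le> C" "C \<le> D" "D \<le> B" by simp_all
  have "0 < \<psi> x" if "x \<in> {0..B}" for x
    using generator_antimono[OF gen, of x B] that B ord by simp
  then have "convex_on {0..B} (\<lambda>x. ln (\<psi> x))" by (rule convex_on_ln_of_log_convex[OF lc])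
  from convex_on_slopes_le[OF this _ _ _ ord'] A B C D ord'
  have slopes: "(ln d - ln b) * (C - A) \<le> (ln a - ln c) * (B - D)"
    by (simp add: algebra_simps)
  have "real p * (C - A) \<le> real q * (B - D)"
  proof (cases "b < d")
    case True
    have "(ln d - ln b) * (real p * (C - A)) = real p * ((ln d - ln b) * (C - A))" by simp
    also have "\<dots> \<le> real p * ((ln a - ln c) * (B - D))" by (rule mult_left_mono[OF slopes]) simp
    also have "\<dots> = (real p * (ln a - ln c)) * (B - D)" by simp
    also have "\<dots> \<le> (real q * (ln d - ln b)) * (B - D)"
      by (rule mult_right_mono[OF log_bound]) (use ord' in simp)
    also have "\<dots> = (ln d - ln b) * (real q * (B - D))" by simp
    finally show ?thesis using True ord by (simp add: mult_le_cancel_left_pos)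
  next
    case False
    then have "d = b" using ord by simp
    have "0 \<le> ln a - ln c" using ord by simp
    then have "real p * (ln a - ln c) = 0"
      using log_bound \<open>d = b\<close> by (intro antisym) simp_all
    then have "p = 0 \<or> a = c" using ord by simp
    then have "real p * (C - A) = 0" using A(2) C(1) by auto
    moreover have "0 \<le> real q * (B - D)" using ord' by simp
    ultimately show ?thesis by linarith
  qed
  then show ?thesis using A B C D by (simp add: block_sum_eq_real algebra_simps)
qed

lemma sum_nth_two_blocks:
  assumes "l \<le> p"
  shows "(\<Sum>i=l..<p + q. (replicate p x @ replicate q y) ! i) = real (p - l) * x + real q * y"
proof -
  have "(\<Sum>i=l..<p + q. (replicate p x @ replicate q y) ! i)
      = (\<Sum>i=l..<p. (replicate p x @ replicate q y) ! i)
        + (\<Sum>i=p..<p + q. (replicate p x @ replicate q y) ! i)"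
    using assms by (simp add: sum.atLeastLessThan_concat)
  also have "\<dots> = (\<Sum>i=l..<p. x) + (\<Sum>i=p..<p + q. y)"
    by (intro arg_cong2[where f = "(+)"] sum.cong) (auto simp: nth_append)
  finally show ?thesis by simp
qed

lemma wmaj_two_blocks:
  assumes "wmaj (replicate p x1 @ replicate q x2) (replicate p y1 @ replicate q y2)"
    and "x1 \<le> x2" "y1 \<le> y2" "l \<le> p" "l < p + q"
  shows "real (p - l) * y1 + real q * y2 \<le> real (p - l) * x1 + real q * x2"
proof -
  have "sort (replicate p x1 @ replicate q x2) = replicate p x1 @ replicate q x2"
    "sort (replicate p y1 @ replicate q y2) = replicate p y1 @ replicate q y2"
    using assms(2,3) by (auto intro!: sorted_sort_id simp: sorted_append)
  with assms(1,5) have "(\<Sum>i=l..<p + q. (replicate p y1 @ replicate q y2) ! i)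
      \<le> (\<Sum>i=l..<p + q. (replicate p x1 @ replicate q x2) ! i)"
    unfolding wmaj_def by simp
  then show ?thesis by (simp only: sum_nth_two_blocks[OF assms(4)])
qed

lemma hazard_separating_level:
  fixes r1 r2 :: "real \<Rightarrow> real"
  assumes "0 < s" and le: "\<And>y. 0 < y \<Longrightarrow> r1 y \<le> r2 y" and nonneg: "\<And>y. 0 < y \<Longrightarrow> 0 \<le> r1 y"
    and mono: "mono_on {0<..} r1 \<or> mono_on {0<..} r2"
  obtains \<rho> where "0 \<le> \<rho>" "\<And>y. 0 < y \<Longrightarrow> y \<le> s \<Longrightarrow> r1 y \<le> \<rho>" "\<And>y. s \<le> y \<Longrightarrow> \<rho> \<le> r2 y"
proof (cases "mono_on {0<..} r1")
  case True
  show ?thesis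
  proof (rule that[of "r1 s"])
    show "r1 s \<le> r2 y" if "s \<le> y" for y
      using mono_onD[OF True, of s y] le[of y] that \<open>0 < s\<close> by simp
  qed (use nonneg \<open>0 < s\<close> mono_onD[OF True] in auto)
next
  case False
  with mono have mono2: "mono_on {0<..} r2" by simp
  show ?thesis
  proof (rule that[of "r2 s"])
    show "r1 y \<le> r2 s" if "0 < y" "y \<le> s" for y
      using mono_onD[OF mono2, of y s] le[of y] that by simp
  qed (use nonneg[of s] le[of s] \<open>0 < s\<close> mono_onD[OF mono2] in auto)
qed

lemma block_sum_exchange:
  assumes gen: "archimedean_generator m \<psi>" and lc: "log_convex \<psi>"
    and F1: "abs_cont_cdf F1 f1" and F2: "abs_cont_cdf F2 f2"
    and hazard_le: "\<And>y. 0 < y \<Longrightarrow> hazard F1 f1 y \<le> hazard F2 f2 y"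
    and incr: "mono_on {0<..} (hazard F1 f1) \<or> mono_on {0<..} (hazard F2 f2)"
    and par: "0 \<le> x" "0 \<le> lam1" "mu1 \<le> mu2" "mu2 \<le> lam2"
    and maj: "real p * mu1 + real q * mu2 \<le> real p * lam1 + real q * lam2"
    and surv: "F2 (lam2 * x) < 1"
  shows "block_sum \<psi> p q (1 - F1 (mu1 * x)) (1 - F2 (mu2 * x))
           \<le> block_sum \<psi> p q (1 - F1 (lam1 * x)) (1 - F2 (lam2 * x))"
proof (cases "mu1 * x \<le> lam1 * x")
  case True
  then show ?thesis
    using cdf_mono[OF F1 True] cdf_mono[OF F2 mult_right_mono[OF par(4,1)]]
    by (intro block_sum_antimono) simp_all
next
  case False
  with par have "0 < x" "lam1 < mu1" by (auto simp: mult_le_cancel_right)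
  define a b c d where a_def: "a = 1 - F1 (lam1 * x)" and b_def: "b = 1 - F2 (lam2 * x)"
    and c_def: "c = 1 - F1 (mu1 * x)" and d_def: "d = 1 - F2 (mu2 * x)"
  have pts: "0 \<le> lam1 * x" "lam1 * x \<le> mu1 * x" "0 < mu1 * x"
    "mu1 * x \<le> mu2 * x" "mu2 * x \<le> lam2 * x"
    using par \<open>0 < x\<close> \<open>lam1 < mu1\<close> by (auto intro: mult_right_mono)
  obtain \<rho> where \<rho>: "0 \<le> \<rho>" "\<And>y. 0 < y \<Longrightarrow> y \<le> mu1 * x \<Longrightarrow> hazard F1 f1 y \<le> \<rho>"
      "\<And>y. mu1 * x \<le> y \<Longrightarrow> \<rho> \<le> hazard F2 f2 y"
    using hazard_separating_level[OF pts(3) hazard_le hazard_nonneg[OF F1] incr] by auto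
  have ord: "0 < b" "b \<le> d" "d \<le> c" "c \<le> a" "a \<le> 1"
    using surv cdf_mono[OF F2 pts(5)] cdf_mono[OF F1 pts(2)] cdf_nonneg[OF F1]
      survival_le_of_hazard_le[OF F1 F2 _ _ pts(4)] hazard_le pts
    by (auto simp: a_def b_def c_def d_def)
  have decr1: "ln a - ln c \<le> \<rho> * (mu1 * x - lam1 * x)"
    unfolding a_def c_def using ord \<rho>(1,2) pts
    by (intro log_survival_decrement_le[OF F1 pts(1,2) \<rho>(1)]) (auto simp: a_def b_def c_def d_def)
  have decr2: "\<rho> * (lam2 * x - mu2 * x) \<le> ln d - ln b"
    unfolding b_def d_def using \<rho>(3) pts surv
    by (intro log_survival_decrement_ge[OF F2 _ pts(5) surv]) auto
  have "real p * (ln a - ln c) \<le> real p * (\<rho> * (mu1 * x - lam1 * x))"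
    by (rule mult_left_mono[OF decr1]) simp
  also have "\<dots> = (\<rho> * x) * (real p * mu1 + real q * mu2 - (real p * lam1 + real q * mu2))"
    by (simp add: algebra_simps)
  also have "\<dots> \<le> (\<rho> * x) * (real p * lam1 + real q * lam2 - (real p * lam1 + real q * mu2))"
    using maj \<rho>(1) \<open>0 < x\<close> by (intro mult_left_mono) auto
  also have "\<dots> = real q * (\<rho> * (lam2 * x - mu2 * x))"
    by (simp add: algebra_simps)
  also have "\<dots> \<le> real q * (ln d - ln b)"
    by (rule mult_left_mono[OF decr2]) simp
  finally have "real p * (ln a - ln c) \<le> real q * (ln d - ln b)" .
  from block_sum_le_of_log_convex[OF gen lc ord this] show ?thesis
    by (simp add: a_def b_def c_def d_def)
qed

lemma gen_ext_block_sum_le: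
  assumes gen1: "archimedean_generator m1 \<psi>1" and gen2: "archimedean_generator m2 \<psi>2"
    and sa: "super_additive (\<lambda>x. gen_inv \<psi>2 (\<psi>1 x))" and lc: "log_convex \<psi>1 \<or> log_convex \<psi>2"
    and vals: "0 \<le> b" "b \<le> a" "a \<le> 1" "0 \<le> c" "c \<le> 1" "0 \<le> d" "d \<le> 1"
    and blocks: "p \<le> p'" "p' + q' \<le> p + q" "0 < q'"
    and exchange: "\<And>m \<psi>. archimedean_generator m \<psi> \<Longrightarrow> log_convex \<psi> \<Longrightarrow> 0 < b \<Longrightarrow>
                     block_sum \<psi> p' q' c d \<le> block_sum \<psi> p' q' a b"
  shows "gen_ext \<psi>1 (block_sum \<psi>1 p q a b) \<le> gen_ext \<psi>2 (block_sum \<psi>2 p' q' c d)"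
proof -
  have nonneg: "0 \<le> block_sum \<psi> p q u v" for \<psi> p q u v
    unfolding block_sum_def by (intro sum_nonneg gen_inv_nonneg)
  have "gen_ext \<psi>1 (block_sum \<psi>1 p q a b) \<le> gen_ext \<psi>1 (block_sum \<psi>1 p' q' a b)"
    using block_sum_mono_blocks[OF vals(2) blocks(1,2)] by (rule gen_ext_antimono[OF gen1 nonneg])
  also have "\<dots> \<le> gen_ext \<psi>2 (block_sum \<psi>2 p' q' c d)"
  proof (cases "b = 0")
    case True
    then show ?thesis
      using gen_ext_block_sum_zero[OF gen1 blocks(3)] gen_ext_nonneg[OF gen2 nonneg] by simp
  next
    case False
    then have "0 < b" using vals by simp
    have super: "gen_ext \<psi>1 (block_sum \<psi>1 p' q' u v) \<le> gen_ext \<psi>2 (block_sum \<psi>2 p' q' u v)"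
      if "0 \<le> u" "u \<le> 1" "0 \<le> v" "v \<le> 1" for u v
      unfolding block_sum_def
      by (rule archimedean_le_of_super_additive[OF gen1 gen2 sa]) (use that in auto)
    from lc show ?thesis
    proof
      assume "log_convex \<psi>1"
      with \<open>0 < b\<close> have "gen_ext \<psi>1 (block_sum \<psi>1 p' q' a b) \<le> gen_ext \<psi>1 (block_sum \<psi>1 p' q' c d)"
        by (intro gen_ext_antimono[OF gen1 nonneg] exchange[OF gen1])
      also have "\<dots> \<le> gen_ext \<psi>2 (block_sum \<psi>2 p' q' c d)" using vals by (intro super)
      finally show ?thesis .
    next
      assume "log_convex \<psi>2"
      have "gen_ext \<psi>1 (block_sum \<psi>1 p' q' a b) \<le> gen_ext \<psi>2 (block_sum \<psi>2 p' q' a b)"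
        using vals by (intro super) auto
      also have "\<dots> \<le> gen_ext \<psi>2 (block_sum \<psi>2 p' q' c d)"
        using \<open>log_convex \<psi>2\<close> \<open>0 < b\<close> by (intro gen_ext_antimono[OF gen2 nonneg] exchange[OF gen2])
      finally show ?thesis .
    qed
  qed
  finally show ?thesis .
qed

lemma prob_Min_gt_eq:
  assumes "arch_survival_copula M m Z Gbar \<psi>" "0 < m"
  shows "measure M {\<omega> \<in> space M. Min ((\<lambda>i. Z i \<omega>) ` {..<m}) > x}
           = gen_ext \<psi> (\<Sum>i<m. gen_inv \<psi> (Gbar i x))"
proof -
  have "Min ((\<lambda>i. Z i \<omega>) ` {..<m}) > x \<longleftrightarrow> (\<forall>i<m. Z i \<omega> > x)" for \<omega>
    using \<open>0 < m\<close> by (subst Min_gr_iff) auto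
  then have "{\<omega> \<in> space M. Min ((\<lambda>i. Z i \<omega>) ` {..<m}) > x} = {\<omega> \<in> space M. \<forall>i<m. Z i \<omega> > x}"
    by simp
  with assms(1) show ?thesis unfolding arch_survival_copula_def by simp
qed

lemma prob_Min_gt_neg:
  fixes Z :: "nat \<Rightarrow> 'a \<Rightarrow> real"
  assumes "prob_space M" and "0 < m" and nonneg: "\<And>i \<omega>. i < m \<Longrightarrow> \<omega> \<in> space M \<Longrightarrow> 0 \<le> Z i \<omega>"
    and "x < 0"
  shows "measure M {\<omega> \<in> space M. Min ((\<lambda>i. Z i \<omega>) ` {..<m}) > x} = 1"
proof -
  have "x < Z i \<omega>" if "i < m" "\<omega> \<in> space M" for i \<omega>
    using nonneg[OF that] \<open>x < 0\<close> by linarith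
  then have "Min ((\<lambda>i. Z i \<omega>) ` {..<m}) > x" if "\<omega> \<in> space M" for \<omega>
    using \<open>0 < m\<close> that by (subst Min_gr_iff) auto
  then have "{\<omega> \<in> space M. Min ((\<lambda>i. Z i \<omega>) ` {..<m}) > x} = space M" by auto
  then show ?thesis using prob_space.prob_space[OF assms(1)] by simp
qed

theorem theorem3p10:
  fixes n1 n2 n1s n2s :: nat
    and M :: "'a measure" and N :: "'b measure"
    and X :: "nat \<Rightarrow> 'a \<Rightarrow> real" and Y :: "nat \<Rightarrow> 'b \<Rightarrow> real"
    and F1 F2 f1 f2 psi1 psi2 :: "real \<Rightarrow> real"
    and lam1 lam2 mu1 mu2 :: real
  assumes nbounds: "1 \<le> n1" "n1 \<le> n1s" "n1s \<le> n2s" "n2s \<le> n2"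
    and M: "prob_space M" and N: "prob_space N"
    and F1: "abs_cont_cdf F1 f1" and F2: "abs_cont_cdf F2 f2"
    and Xrv: "\<And>i. i < n1 + n2 \<Longrightarrow> X i \<in> borel_measurable M"
    and Xnn: "\<And>i \<omega>. i < n1 + n2 \<Longrightarrow> \<omega> \<in> space M \<Longrightarrow> 0 \<le> X i \<omega>"
    and Xm1: "\<And>i x. i < n1 \<Longrightarrow> measure M {\<omega> \<in> space M. X i \<omega> \<le> x} = F1 (lam1 * x)"
    and Xm2: "\<And>i x. n1 \<le> i \<Longrightarrow> i < n1 + n2 \<Longrightarrow>
                measure M {\<omega> \<in> space M. X i \<omega> \<le> x} = F2 (lam2 * x)"
    and Yrv: "\<And>i. i < n1s + n2s \<Longrightarrow> Y i \<in> borel_measurable N"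
    and Ynn: "\<And>i \<omega>. i < n1s + n2s \<Longrightarrow> \<omega> \<in> space N \<Longrightarrow> 0 \<le> Y i \<omega>"
    and Ym1: "\<And>i x. i < n1s \<Longrightarrow> measure N {\<omega> \<in> space N. Y i \<omega> \<le> x} = F1 (mu1 * x)"
    and Ym2: "\<And>i x. n1s \<le> i \<Longrightarrow> i < n1s + n2s \<Longrightarrow>
                measure N {\<omega> \<in> space N. Y i \<omega> \<le> x} = F2 (mu2 * x)"
    and gen1: "archimedean_generator (n1 + n2) psi1"
    and gen2: "archimedean_generator (n1s + n2s) psi2"
    and copX: "arch_survival_copula M (n1 + n2) X
                 (\<lambda>i x. if i < n1 then 1 - F1 (lam1 * x) else 1 - F2 (lam2 * x)) psi1"
    and copY: "arch_survival_copula N (n1s + n2s) Y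
                 (\<lambda>i x. if i < n1s then 1 - F1 (mu1 * x) else 1 - F2 (mu2 * x)) psi2"
    and hr: "\<And>x. 0 < x \<Longrightarrow> hazard F1 f1 x \<le> hazard F2 f2 x"
    and lam: "0 < lam1" "lam1 \<le> lam2"
    and mu: "0 < mu1" "mu1 \<le> mu2"
    and nmaj: "wmaj [real n1, real n2] [real n1s, real n2s]"
    and sup: "super_additive (\<lambda>x. gen_inv psi2 (psi1 x))"
    and logc: "log_convex psi1 \<or> log_convex psi2"
    and incr: "mono_on {0<..} (hazard F1 f1) \<or> mono_on {0<..} (hazard F2 f2)"
    and pmaj: "wmaj (replicate n1s lam1 @ replicate n2s lam2) (replicate n1s mu1 @ replicate n2s mu2)"
  shows "\<forall>x. measure M {\<omega> \<in> space M. Min ((\<lambda>i. X i \<omega>) ` {..<n1 + n2}) > x}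
           \<le> measure N {\<omega> \<in> space N. Min ((\<lambda>i. Y i \<omega>) ` {..<n1s + n2s}) > x}"
proof (intro allI, goal_cases)
  \<comment> \<open>The copula hypotheses determine the joint survival functions.\<close>
  case (1 x)
  show ?case
  proof (cases "x < 0")
    case True
    have "measure N {\<omega> \<in> space N. Min ((\<lambda>i. Y i \<omega>) ` {..<n1s + n2s}) > x} = 1"
      by (rule prob_Min_gt_neg[OF N _ Ynn]) (use nbounds True in auto)
    then show ?thesis using prob_space.prob_le_1[OF M] by simp
  next
    case False
    have n_le: "n1s + n2s \<le> n1 + n2"
      using wmaj_two_blocks[of 1 "real n1" 1 "real n2" "real n1s" "real n2s" 0] nmaj nbounds by simp
    have mu_lam: "real n1s * mu1 + real n2s * mu2 \<le> real n1s * lam1 + real n2s * lam2" "mu2 \<le> lam2"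
      using wmaj_two_blocks[OF pmaj lam(2) mu(2), of 0]
        wmaj_two_blocks[OF pmaj lam(2) mu(2), of n1s] nbounds by auto
    have "measure M {\<omega> \<in> space M. Min ((\<lambda>i. X i \<omega>) ` {..<n1 + n2}) > x}
        = gen_ext psi1 (block_sum psi1 n1 n2 (1 - F1 (lam1 * x)) (1 - F2 (lam2 * x)))"
      using prob_Min_gt_eq[OF copX] nbounds by (simp add: block_sum_def)
    also have "\<dots> \<le> gen_ext psi2 (block_sum psi2 n1s n2s (1 - F1 (mu1 * x)) (1 - F2 (mu2 * x)))"
    proof (rule gen_ext_block_sum_le[OF gen1 gen2 sup logc])
      show "1 - F2 (lam2 * x) \<le> 1 - F1 (lam1 * x)"
        using False lam hr
        by (intro survival_le_of_hazard_le[OF F1 F2]) (auto intro: mult_right_mono)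
      show "block_sum \<psi> n1s n2s (1 - F1 (mu1 * x)) (1 - F2 (mu2 * x))
          \<le> block_sum \<psi> n1s n2s (1 - F1 (lam1 * x)) (1 - F2 (lam2 * x))"
        if "archimedean_generator m \<psi>" "log_convex \<psi>" "0 < 1 - F2 (lam2 * x)" for m \<psi>
        using that False lam mu mu_lam
        by (intro block_sum_exchange[OF _ _ F1 F2 hr incr]) auto
    qed (use nbounds n_le cdf_nonneg[OF F1] cdf_nonneg[OF F2] cdf_le_1[OF F1] cdf_le_1[OF F2]
         in auto)
    also have "\<dots> = measure N {\<omega> \<in> space N. Min ((\<lambda>i. Y i \<omega>) ` {..<n1s + n2s}) > x}"
      using prob_Min_gt_eq[OF copY] nbounds by (simp add: block_sum_def)
    finally show ?thesis .
  qed
qed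

end
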